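(* If $\mathbb{K}=(K,+,\times,0,1)$ is an additively positive semifield, then the inner consistency property holds for $\mathbb{K}$-relations via the Vorob'ev $\mathbb{K}$-join; that is, for any two $\mathbb{K}$-relations $R(X)$ and $S(Y)$ with $R[X\cap Y]=S[X\cap Y]$, their Vorob'ev $\mathbb{K}$-join $W$ satisfies $W[X]=R$ and $W[Y]=S$.
   Context: A semifield is a semiring ($(K,+,0)$, $(K,\times,1)$ commutative monoids, distributivity, $0$ annihilates) in which every $p\ne0$ has a multiplicative inverse $1/p$; write $p/q=p\times(1/q)$. Additively positive: $p+q=0$ implies $p=q=0$. Attributes have domains; for a finite attribute set $X$, an $X$-tuple assigns each attribute a value in its domain; $t[Y]$ is restriction. A $\mathbb{K}$-relation over $X$ is a function $R$ from $X$-tuples to $K$ with finite support $R'$; marginals $R[Y](t)=\sum_{r\in R',r[Y]=t}R(r)$. For $\mathbb{K}$-relations $R(X),S(Y)$ with $R[X\cap Y]=S[X\cap Y]$, the Vorob'ev $\mathbb{K}$-join is the $\mathbb{K}$-relation $W$ over $X\cup Y$ with $W(t)=R(t[X])\times S(t[Y])/R(t[X\cap Y])$ if $R(t[X\cap Y])\ne0$ (here $R(t[X\cap Y])$ denotes $R[X\cap Y](t[X\cap Y])$), and $W(t)=0$ otherwise. *)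

theory Defs
  imports "HOL-Library.FuncSet"
begin

class semifield = comm_semiring_1 + inverse +
  assumes sf_right_inverse: "a \<noteq> 0 \<Longrightarrow> a * inverse a = 1"
  assumes sf_divide: "a / b = a * inverse b"

definition additively_positive :: "'k::semifield itself \<Rightarrow> bool" where
  "additively_positive _ \<longleftrightarrow> (\<forall>p q :: 'k. p + q = 0 \<longrightarrow> p = 0 \<and> q = 0)"

text \<open>X-tuples over attribute domains D: extensional functions on X
  (value undefined outside X), t[Y] = restrict t Y.\<close>
definition tuples :: "('a \<Rightarrow> 'v set) \<Rightarrow> 'a set \<Rightarrow> ('a \<Rightarrow> 'v) set" where
  "tuples D X = PiE X D"

definition support :: "(('a \<Rightarrow> 'v) \<Rightarrow> 'k::zero) \<Rightarrow> ('a \<Rightarrow> 'v) set" where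
  "support R = {t. R t \<noteq> 0}"

definition is_KRel :: "('a \<Rightarrow> 'v set) \<Rightarrow> 'a set \<Rightarrow> (('a \<Rightarrow> 'v) \<Rightarrow> 'k::zero) \<Rightarrow> bool" where
  "is_KRel D X R \<longleftrightarrow> finite (support R) \<and> support R \<subseteq> tuples D X"

definition marg :: "(('a \<Rightarrow> 'v) \<Rightarrow> 'k::comm_monoid_add) \<Rightarrow> 'a set \<Rightarrow> ('a \<Rightarrow> 'v) \<Rightarrow> 'k" where
  "marg R Y t = (\<Sum>r\<in>{r \<in> support R. restrict r Y = t}. R r)"

definition vjoin :: "('a \<Rightarrow> 'v set) \<Rightarrow> 'a set \<Rightarrow> 'a set \<Rightarrow> (('a \<Rightarrow> 'v) \<Rightarrow> 'k::semifield)
    \<Rightarrow> (('a \<Rightarrow> 'v) \<Rightarrow> 'k) \<Rightarrow> ('a \<Rightarrow> 'v) \<Rightarrow> 'k" where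
  "vjoin D X Y R S t =
     (if t \<in> tuples D (X \<union> Y) \<and> marg R (X \<inter> Y) (restrict t (X \<inter> Y)) \<noteq> 0
      then R (restrict t X) * S (restrict t Y) / marg R (X \<inter> Y) (restrict t (X \<inter> Y))
      else 0)"

end

theory Submission
  imports Defs
begin

text \<open>Fix an X-tuple t with R t \<noteq> 0 and put c = R[X \<inter> Y](t[X \<inter> Y]); additive positivity
  gives c \<noteq> 0. Every (X \<union> Y)-tuple r extending t is determined by r[Y], and the possible
  r[Y] are exactly the Y-tuples agreeing with t on X \<inter> Y. Hence the join W has W[X](t) equal to
  R t / c times the sum of S over these Y-tuples, which is S[X \<inter> Y](t[X \<inter> Y]) = c.
  The Y-side follows by symmetry of the join.\<close>

lemma semifield_mult_inverse_cancel:
  fixes a c :: "'k::semifield"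
  assumes "c \<noteq> 0"
  shows "a * inverse c * c = a"
  using sf_right_inverse[OF assms] by (metis mult.assoc mult.commute mult_1_right)

lemma additively_positive_sum_eq_0D:
  fixes f :: "'b \<Rightarrow> 'k::semifield"
  assumes "additively_positive TYPE('k)" and "finite A" and "sum f A = 0" and "x \<in> A"
  shows "f x = 0"
  using assms(2-4)
proof (induction A rule: finite_induct)
  case empty
  then show ?case by simp
next
  case (insert y F)
  then have "f y + sum f F = 0" by simp
  with assms(1) have "f y = 0" "sum f F = 0"
    unfolding additively_positive_def by blast+
  with insert show ?case by auto
qed

lemma marg_restrict_eq_0D:
  fixes R :: "('a \<Rightarrow> 'v) \<Rightarrow> 'k::semifield"
  assumes "additively_positive TYPE('k)" and "finite (support R)"
    and "marg R Y (restrict t Y) = 0"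
  shows "R t = 0"
proof (cases "t \<in> support R")
  case True
  then show ?thesis
    using additively_positive_sum_eq_0D[OF assms(1) _ assms(3)[unfolded marg_def]] assms(2)
    by simp
qed (simp add: support_def)

lemma marg_eq_sum:
  assumes "finite A" and "{r \<in> support f. restrict r Y = t} \<subseteq> A"
    and "\<And>r. r \<in> A \<Longrightarrow> restrict r Y = t"
  shows "marg f Y t = sum f A"
  unfolding marg_def using assms
  by (intro sum.mono_neutral_left) (auto simp: support_def)

lemma tuples_Un_eqI:
  assumes "r1 \<in> tuples D (X \<union> Y)" and "r2 \<in> tuples D (X \<union> Y)"
    and "restrict r1 X = restrict r2 X" and "restrict r1 Y = restrict r2 Y"
  shows "r1 = r2"
  using assms(1,2) unfolding tuples_def
proof (rule PiE_ext)
  fix a assume "a \<in> X \<union> Y"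
  then show "r1 a = r2 a"
    using fun_cong[OF assms(3), of a] fun_cong[OF assms(4), of a] by auto
qed

lemma tuples_Un_glue:
  assumes t: "t \<in> tuples D X" and s: "s \<in> tuples D Y"
    and agree: "restrict t (X \<inter> Y) = restrict s (X \<inter> Y)"
  obtains r where "r \<in> tuples D (X \<union> Y)" "restrict r X = t" "restrict r Y = s"
proof
  let ?r = "\<lambda>a. if a \<in> X then t a else s a"
  have "t a = s a" if "a \<in> X" "a \<in> Y" for a
    using fun_cong[OF agree, of a] that by simp
  with t s show "?r \<in> tuples D (X \<union> Y)" "restrict ?r X = t" "restrict ?r Y = s"
    unfolding tuples_def by (auto simp: PiE_iff extensional_def)
qed

lemma bij_betw_restrict_tuples_fiber:
  assumes t: "t \<in> tuples D X"
  shows "bij_betw (\<lambda>r. restrict r Y) {r \<in> tuples D (X \<union> Y). restrict r X = t}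
           {s \<in> tuples D Y. restrict s (X \<inter> Y) = restrict t (X \<inter> Y)}"
proof (rule bij_betw_imageI)
  show "inj_on (\<lambda>r. restrict r Y) {r \<in> tuples D (X \<union> Y). restrict r X = t}"
    by (rule inj_onI) (auto intro: tuples_Un_eqI)
  show "(\<lambda>r. restrict r Y) ` {r \<in> tuples D (X \<union> Y). restrict r X = t}
      = {s \<in> tuples D Y. restrict s (X \<inter> Y) = restrict t (X \<inter> Y)}"
  proof (intro equalityI subsetI)
    fix s assume "s \<in> (\<lambda>r. restrict r Y) ` {r \<in> tuples D (X \<union> Y). restrict r X = t}"
    then obtain r where r: "r \<in> tuples D (X \<union> Y)" "restrict r X = t" and s: "s = restrict r Y"
      by blast
    have "restrict s (X \<inter> Y) = restrict (restrict r X) (X \<inter> Y)"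
      unfolding s by (simp add: Int_absorb1)
    with r s show "s \<in> {s \<in> tuples D Y. restrict s (X \<inter> Y) = restrict t (X \<inter> Y)}"
      unfolding tuples_def by (simp add: PiE_iff)
  next
    fix s assume "s \<in> {s \<in> tuples D Y. restrict s (X \<inter> Y) = restrict t (X \<inter> Y)}"
    then have "s \<in> tuples D Y" "restrict t (X \<inter> Y) = restrict s (X \<inter> Y)"
      by simp_all
    then obtain r where "r \<in> tuples D (X \<union> Y)" "restrict r X = t" "restrict r Y = s"
      using tuples_Un_glue[OF t] by blast
    then show "s \<in> (\<lambda>r. restrict r Y) ` {r \<in> tuples D (X \<union> Y). restrict r X = t}"
      by blast
  qed
qed

lemma support_vjoin_subset:
  "support (vjoin D X Y R S)
     \<subseteq> {r \<in> tuples D (X \<union> Y). R (restrict r X) \<noteq> 0 \<and> S (restrict r Y) \<noteq> 0}"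
  by (auto simp: support_def vjoin_def sf_divide split: if_splits)

lemma vjoin_commute:
  assumes "marg R (X \<inter> Y) = marg S (X \<inter> Y)"
  shows "vjoin D X Y R S = vjoin D Y X S R"
proof
  fix t
  show "vjoin D X Y R S t = vjoin D Y X S R t"
    unfolding vjoin_def Int_commute[of Y X] Un_commute[of Y X] assms
    by (simp only: mult.commute)
qed

lemma marg_vjoin_left:
  fixes R S :: "('a \<Rightarrow> 'v) \<Rightarrow> 'k::semifield"
  assumes ap: "additively_positive TYPE('k)"
    and R: "is_KRel D X R" and S: "is_KRel D Y S"
    and consistent: "marg R (X \<inter> Y) = marg S (X \<inter> Y)"
  shows "marg (vjoin D X Y R S) X = R"
proof
  fix t
  let ?W = "vjoin D X Y R S"
  show "marg ?W X t = R t"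
  proof (cases "R t = 0")
    case True
    then have fiber: "{r \<in> support ?W. restrict r X = t} = {}"
      using support_vjoin_subset by fastforce
    show ?thesis
      unfolding marg_def fiber using True by simp
  next
    case False
    define u where "u = restrict t (X \<inter> Y)"
    define c where "c = marg R (X \<inter> Y) u"
    define A where "A = {r \<in> tuples D (X \<union> Y). restrict r X = t \<and> restrict r Y \<in> support S}"
    define B where "B = {s \<in> support S. restrict s (X \<inter> Y) = u}"
    have t: "t \<in> tuples D X"
      using R False unfolding is_KRel_def support_def by auto
    have c: "c \<noteq> 0"
      using marg_restrict_eq_0D[OF ap, of R] R False unfolding c_def u_def is_KRel_def by blast
    have "A = {r \<in> {r \<in> tuples D (X \<union> Y). restrict r X = t}. restrict r Y \<in> support S}"
      and "B = {s \<in> {s \<in> tuples D Y. restrict s (X \<inter> Y) = u}. s \<in> support S}"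
      using S unfolding A_def B_def is_KRel_def by auto
    then have bij: "bij_betw (\<lambda>r. restrict r Y) A B"
      using bij_betw_Collect[OF bij_betw_restrict_tuples_fiber[OF t]] unfolding u_def by simp
    moreover have "finite B"
      using S unfolding B_def is_KRel_def by simp
    ultimately have "finite A"
      by (simp add: bij_betw_finite)
    have W: "?W r = R t * inverse c * S (restrict r Y)" if "r \<in> A" for r
    proof -
      have "t = restrict r X"
        using that unfolding A_def by simp
      then have "restrict r (X \<inter> Y) = u"
        unfolding u_def by (simp add: Int_absorb1)
      with that c show ?thesis
        unfolding vjoin_def A_def c_def by (simp add: sf_divide ac_simps)
    qed
    have "marg ?W X t = sum ?W A"
      using \<open>finite A\<close> support_vjoin_subset[of D X Y R S]
      by (intro marg_eq_sum) (auto simp: A_def support_def)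
    also have "\<dots> = R t * inverse c * (\<Sum>r\<in>A. S (restrict r Y))"
      by (simp add: W sum_distrib_left)
    also have "(\<Sum>r\<in>A. S (restrict r Y)) = sum S B"
      using sum.reindex_bij_betw[OF bij] .
    also have "sum S B = c"
      unfolding c_def consistent marg_def B_def ..
    finally show ?thesis
      using semifield_mult_inverse_cancel[OF c] by simp
  qed
qed

theorem proposition21:
  fixes D :: "'a \<Rightarrow> 'v set" and X Y :: "'a set"
    and R S :: "('a \<Rightarrow> 'v) \<Rightarrow> 'k::semifield"
  assumes "additively_positive TYPE('k)"
    and "finite X" and "finite Y"
    and "is_KRel D X R" and "is_KRel D Y S"
    and "marg R (X \<inter> Y) = marg S (X \<inter> Y)"
  shows "marg (vjoin D X Y R S) X = R \<and> marg (vjoin D X Y R S) Y = S"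
proof
  show "marg (vjoin D X Y R S) X = R"
    using marg_vjoin_left assms(1,4-6) .
  have "marg (vjoin D Y X S R) Y = S"
    using marg_vjoin_left assms(1,5,4) assms(6)[unfolded Int_commute[of X Y]] by metis
  then show "marg (vjoin D X Y R S) Y = S"
    using vjoin_commute[OF assms(6)] by simp
qed

end
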